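(* Let $E$ be an equation in the unknowns $x_1,\dots,x_n$ and let $h$ be an erasing solution of $E$ of rank $n-1$. Then $h(x_k)$ is the empty word for exactly one index $k$, the equation $\delta_k(E)$ is trivial, and $\Gamma_h=\{\mathbf u\in\mathbb Q^n:(\mathbf u)_k=0\}$.
   Context: An equation is a pair $(u,v)$ of words over $\{x_1,\dots,x_n\}$, trivial if $u=v$; a solution is a morphism $h$ into a free monoid $\{a_1,\dots,a_r\}^*$ with $h(u)=h(v)$; $h$ is erasing if some $h(x_i)$ is empty. $\gamma(h)_i=(|h(x_1)|_{a_i},\dots,|h(x_n)|_{a_i})$, $\Gamma_h$ is the $\mathbb Q$-span of the $\gamma(h)_i$ and the rank of $h$ is $\dim\Gamma_h$. $\delta_k(E)$ denotes the equation in $n-1$ unknowns obtained from $E$ by deleting all occurrences of $x_k$ on both sides. *)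

theory Defs
  imports "HOL-Analysis.Analysis"
begin

text \<open>Unknowns are the elements of a finite type 'x (so n = CARD('x)); letters of the
alphabet are elements of a finite type 'a. Words are lists. An equation is a pair of words.\<close>

type_synonym 'x equation = "'x list \<times> 'x list"

definition trivial_eq :: "'x equation \<Rightarrow> bool" where
  "trivial_eq E \<longleftrightarrow> fst E = snd E"

definition morph :: "('x \<Rightarrow> 'a list) \<Rightarrow> 'x list \<Rightarrow> 'a list" where
  "morph h w = concat (map h w)"

definition is_solution :: "('x \<Rightarrow> 'a list) \<Rightarrow> 'x equation \<Rightarrow> bool" where
  "is_solution h E \<longleftrightarrow> morph h (fst E) = morph h (snd E)"

definition erasing :: "('x \<Rightarrow> 'a list) \<Rightarrow> bool" where
  "erasing h \<longleftrightarrow> (\<exists>x. h x = [])"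

definition gamma :: "('x::finite \<Rightarrow> 'a list) \<Rightarrow> 'a \<Rightarrow> rat ^ 'x" where
  "gamma h a = (\<chi> x. of_nat (count_list (h x) a))"

definition Gamma :: "('x::finite \<Rightarrow> 'a::finite list) \<Rightarrow> (rat ^ 'x) set" where
  "Gamma h = vec.span (range (gamma h))"

definition rank :: "('x::finite \<Rightarrow> 'a::finite list) \<Rightarrow> nat" where
  "rank h = vec.dim (Gamma h)"

definition delta :: "'x \<Rightarrow> 'x equation \<Rightarrow> 'x equation" where
  "delta k E = (filter (\<lambda>y. y \<noteq> k) (fst E), filter (\<lambda>y. y \<noteq> k) (snd E))"

end

theory Submission
  imports Defs
begin

(* The combinatorial heart is a defect-type statement: if u \<noteq> v and
   h(u) = h(v) for a morphism h that erases no unknown occurring in u or v, then the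
   letter-count columns (|h(x)|_a)_a of the unknowns x occurring in u, v satisfy a
   nontrivial rational linear relation (count_dependent).  It is proved by induction on
   the total length of h: after cancelling a common prefix the equation reads x... = y...
   with h(x) = h(y) t, and the Nielsen substitution x \<mapsto> y x turns h into the shorter
   solution h(x := t) of a new nontrivial equation; relations transfer back along it.
   Linear algebra then finishes the theorem: Gamma_h lies in the coordinate subspace of
   the erased unknowns Z, of dimension n - |Z|, so rank n - 1 forces |Z| = 1, say Z = {k},
   and equality of dimensions gives Gamma_h = {u. u_k = 0}.  If delta_k(E) were nontrivial,
   the defect lemma would give a nonzero vector orthogonal to Gamma_h and vanishing at k,
   which is impossible since Gamma_h then contains every other coordinate axis. *)

lemma morph_simps [simp]:
  "morph g [] = []" "morph g (x # w) = g x @ morph g w"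
  by (auto simp: morph_def)

lemma morph_filter_erased: "h k = [] \<Longrightarrow> morph h (filter (\<lambda>y. y \<noteq> k) w) = morph h w"
  by (induction w) auto

text \<open>The Nielsen substitution x \<mapsto> y x, written as a morphism on unknowns.  If h(x) = h(y) t,
  then h is the composition of this substitution with the shorter morphism h(x := t).\<close>
definition nielsen :: "'x \<Rightarrow> 'x \<Rightarrow> 'x \<Rightarrow> 'x list" where
  "nielsen x y w = (if w = x then [y, x] else [w])"

lemma morph_nielsen:
  assumes "x \<noteq> y" and "g x = g y @ t"
  shows "morph (g(x := t)) (morph (nielsen x y) w) = morph g w"
  by (induction w) (use assms in \<open>auto simp: nielsen_def\<close>)

lemma set_morph_nielsen: "set (morph (nielsen x y) w) \<subseteq> set w \<union> {y}"
  by (induction w) (auto simp: nielsen_def)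

text \<open>No image of the substitution starts with x; this keeps the new equation nontrivial.\<close>
lemma morph_nielsen_head: "x \<noteq> y \<Longrightarrow> x # r \<noteq> morph (nielsen x y) (z # w)"
  by (cases "z = x") (auto simp: nielsen_def)

section \<open>Linear relations between letter counts\<close>

text \<open>The letter-count vectors (|g(w)|_a)_a of the unknowns w in V are linearly dependent over Q.
  Equivalently, some nonzero vector supported on V is orthogonal to every gamma g a.\<close>
definition count_dependent :: "('x::finite \<Rightarrow> 'a list) \<Rightarrow> 'x set \<Rightarrow> bool" where
  "count_dependent g V \<longleftrightarrow> (\<exists>c::'x \<Rightarrow> rat. (\<exists>w. c w \<noteq> 0) \<and> (\<forall>w. c w \<noteq> 0 \<longrightarrow> w \<in> V) \<and>
     (\<forall>a. (\<Sum>w\<in>UNIV. c w * of_nat (count_list (g w) a)) = 0))"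

lemma count_dependent_mono: "count_dependent g V \<Longrightarrow> V \<subseteq> W \<Longrightarrow> count_dependent g W"
  unfolding count_dependent_def by blast

lemma count_dependent_erased:
  assumes "g w = []" and "w \<in> V"
  shows "count_dependent g V"
proof -
  have "(\<Sum>z\<in>UNIV. (if z = w then 1 else 0) * of_nat (count_list (g z) a)) = (0::rat)" for a
    using assms(1) by (intro sum.neutral) auto
  then show ?thesis
    unfolding count_dependent_def using assms(2) by (intro exI[of _ "\<lambda>z. if z = w then 1 else 0"]) auto
qed

text \<open>Dependences transfer back along a Nielsen step: the count vector of x under g is that
  under g(x := t) plus the count vector of y, so a relation c' for g(x := t) yields the relation
  c' - c'(x) e_y for g.\<close>
lemma count_dependent_nielsen:
  fixes g :: "'x::finite \<Rightarrow> 'a list"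
  assumes xy: "x \<noteq> y" and gx: "g x = g y @ t" and yV: "y \<in> V"
    and dep: "count_dependent (g(x := t)) V"
  shows "count_dependent g V"
proof -
  obtain c' :: "'x \<Rightarrow> rat" where nz: "\<exists>w. c' w \<noteq> 0" and supp: "\<forall>w. c' w \<noteq> 0 \<longrightarrow> w \<in> V"
    and rel: "\<And>a. (\<Sum>w\<in>UNIV. c' w * of_nat (count_list ((g(x := t)) w) a)) = 0"
    using dep unfolding count_dependent_def by blast
  define c where "c w = c' w - (if w = y then c' x else 0)" for w
  have "\<exists>w. c w \<noteq> 0"
  proof (cases "c' x = 0")
    case True
    then have "c = c'" by (auto simp: c_def)
    then show ?thesis using nz by simp
  next
    case False
    then have "c x \<noteq> 0" using xy by (simp add: c_def)
    then show ?thesis ..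
  qed
  moreover have "\<forall>w. c w \<noteq> 0 \<longrightarrow> w \<in> V"
    using supp yV by (auto simp: c_def split: if_splits)
  moreover have "(\<Sum>w\<in>UNIV. c w * of_nat (count_list (g w) a)) = 0" for a
  proof -
    define F where "F w = (of_nat (count_list (g w) a) :: rat)" for w
    have count_t: "of_nat (count_list ((g(x := t)) w) a) = F w - (if w = x then F y else 0)" for w
      using gx by (auto simp: F_def)
    have "(\<Sum>w\<in>UNIV. c' w * of_nat (count_list ((g(x := t)) w) a))
        = (\<Sum>w\<in>UNIV. c' w * F w - (if w = x then c' x * F y else 0))"
      unfolding count_t by (intro sum.cong) (auto simp: right_diff_distrib)
    also have "\<dots> = (\<Sum>w\<in>UNIV. c' w * F w) - c' x * F y"
      by (simp add: sum_subtractf)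
    also have "\<dots> = (\<Sum>w\<in>UNIV. c' w * F w - (if w = y then c' x * F y else 0))"
      by (simp add: sum_subtractf)
    also have "\<dots> = (\<Sum>w\<in>UNIV. c w * F w)"
      by (rule sum.cong) (auto simp: c_def left_diff_distrib)
    finally show ?thesis using rel[of a] by (simp add: F_def)
  qed
  ultimately show ?thesis unfolding count_dependent_def by blast
qed

section \<open>The defect lemma for nontrivial equations\<close>

lemma equation_first_difference:
  assumes "u \<noteq> v" and "morph g u = morph g v" and "\<forall>z\<in>set u \<union> set v. g z \<noteq> []"
  shows "\<exists>x y u' v'. x \<noteq> y \<and> morph g (x # u') = morph g (y # v') \<and>
           set (x # u') \<subseteq> set u \<and> set (y # v') \<subseteq> set v"
  using assms
proof (induction u arbitrary: v)
  case Nil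
  then show ?case by (cases v) auto
next
  case (Cons a u)
  then show ?case
  proof (cases v)
    case (Cons b v')
    show ?thesis
    proof (cases "a = b")
      case True
      then have "u \<noteq> v'" "morph g u = morph g v'" "\<forall>z\<in>set u \<union> set v'. g z \<noteq> []"
        using Cons.prems \<open>v = b # v'\<close> by auto
      then obtain x y u' v'' where "x \<noteq> y" "morph g (x # u') = morph g (y # v'')"
        "set (x # u') \<subseteq> set u" "set (y # v'') \<subseteq> set v'"
        using Cons.IH by blast
      then show ?thesis using \<open>v = b # v'\<close> by (intro exI[of _ x] exI[of _ y]) auto
    next
      case False
      then show ?thesis using Cons.prems \<open>v = b # v'\<close> by (intro exI[of _ a] exI[of _ b]) auto
    qed
  qed auto
qed

text \<open>Levi's lemma applied to those first unknowns x \<noteq> y gives, up to swapping sides,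
  h(x) = h(y) t.\<close>
lemma equation_prefix_split:
  assumes "u \<noteq> v" and "morph g u = morph g v" and "\<forall>z\<in>set u \<union> set v. g z \<noteq> []"
  shows "\<exists>x y u' v' t. x \<noteq> y \<and> g x = g y @ t \<and> morph g (x # u') = morph g (y # v') \<and>
           set (x # u') \<union> set (y # v') \<subseteq> set u \<union> set v"
proof -
  obtain x y u' v' where xy: "x \<noteq> y" and eq: "g x @ morph g u' = g y @ morph g v'"
    and sub: "set (x # u') \<union> set (y # v') \<subseteq> set u \<union> set v"
    using equation_first_difference[OF assms] by fastforce
  obtain t where "g x = g y @ t \<or> g y = g x @ t"
    using eq by (metis append_eq_append_conv2)
  then show ?thesis
  proof
    assume "g x = g y @ t"
    then show ?thesis using xy eq sub by (intro exI[of _ x] exI[of _ y] exI[of _ u'] exI[of _ v']) auto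
  next
    assume "g y = g x @ t"
    then show ?thesis using xy eq sub by (intro exI[of _ y] exI[of _ x] exI[of _ v'] exI[of _ u']) auto
  qed
qed

definition total_length :: "('x::finite \<Rightarrow> 'a list) \<Rightarrow> nat" where
  "total_length g = (\<Sum>z\<in>UNIV. length (g z))"

lemma total_length_update_less:
  assumes "length t < length (g x)"
  shows "total_length (g(x := t)) < total_length g"
proof -
  have "(\<Sum>z\<in>UNIV - {x}. length ((g(x := t)) z)) = (\<Sum>z\<in>UNIV - {x}. length (g z))"
    by (rule sum.cong) auto
  then show ?thesis
    using assms by (simp add: total_length_def sum.remove[of UNIV x])
qed

lemma nontrivial_equation_count_dependent:
  assumes "u \<noteq> v" and "morph g u = morph g v" and "\<forall>z\<in>set u \<union> set v. g z \<noteq> []"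
  shows "count_dependent g (set u \<union> set v)"
  using assms
proof (induction "total_length g" arbitrary: g u v rule: less_induct)
  case (less g u v)
  define V where "V = set u \<union> set v"
  obtain x y u' v' t where xy: "x \<noteq> y" and gx: "g x = g y @ t"
    and eq: "morph g (x # u') = morph g (y # v')" and sub: "set (x # u') \<union> set (y # v') \<subseteq> V"
    using equation_prefix_split[OF less.prems] unfolding V_def by blast
  have "count_dependent (g(x := t)) V"
  proof (cases "t = []")
    case True
    then show ?thesis using sub by (intro count_dependent_erased) auto
  next
    case False
    let ?g' = "g(x := t)" and ?u = "x # morph (nielsen x y) u'" and ?v = "morph (nielsen x y) v'"
    have "v' \<noteq> []" using eq gx False by auto
    then have "?u \<noteq> ?v" using xy by (metis morph_nielsen_head neq_Nil_conv)
    moreover have "morph ?g' ?u = morph ?g' ?v"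
      using eq gx morph_nielsen[OF xy gx] by simp
    moreover have sub': "set ?u \<union> set ?v \<subseteq> V"
      using sub set_morph_nielsen[of x y u'] set_morph_nielsen[of x y v'] by auto
    moreover have "\<forall>z\<in>set ?u \<union> set ?v. ?g' z \<noteq> []"
      using sub' less.prems(3) False unfolding V_def by auto
    moreover have "total_length ?g' < total_length g"
      using gx sub less.prems(3) unfolding V_def by (intro total_length_update_less) auto
    ultimately have "count_dependent ?g' (set ?u \<union> set ?v)"
      using less.hyps by blast
    then show ?thesis using sub' by (rule count_dependent_mono)
  qed
  then show ?case
    using count_dependent_nielsen[OF xy gx] sub unfolding V_def by auto
qed

section \<open>Coordinate subspaces\<close>

lemma in_span_axes:
  assumes "\<forall>i. i \<notin> I \<longrightarrow> (u::'a::field^'n) $ i = 0"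
  shows "u \<in> vec.span ((\<lambda>i. axis i 1) ` I)"
proof -
  have "u = (\<Sum>i\<in>UNIV. u $ i *s axis i 1)" by (rule basis_expansion[symmetric])
  also have "\<dots> = (\<Sum>i\<in>I. u $ i *s axis i 1)"
    by (rule sum.mono_neutral_right) (use assms in auto)
  also have "\<dots> \<in> vec.span ((\<lambda>i. axis i 1) ` I)"
    by (intro vec.span_sum vec.span_scale vec.span_base) auto
  finally show ?thesis .
qed

lemma subspace_coordinate: "vec.subspace {u::'a::field^'n. \<forall>i\<in>Z. u $ i = 0}"
  by (auto simp: vec.subspace_def)

lemma dim_coordinate_subspace:
  "vec.dim {u::'a::field^'n. \<forall>i\<in>Z. u $ i = 0} = CARD('n) - card Z"
proof -
  define B :: "('a^'n) set" where "B = (\<lambda>i. axis i 1) ` (- Z)"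
  have "{u::'a^'n. \<forall>i\<in>Z. u $ i = 0} = vec.span B"
  proof
    show "{u::'a^'n. \<forall>i\<in>Z. u $ i = 0} \<subseteq> vec.span B"
      unfolding B_def by (auto intro: in_span_axes)
    show "vec.span B \<subseteq> {u. \<forall>i\<in>Z. u $ i = 0}"
      by (rule vec.span_minimal[OF _ subspace_coordinate]) (auto simp: B_def axis_def)
  qed
  moreover have "vec.independent B"
    by (rule vec.independent_mono[OF independent_cart_basis]) (auto simp: B_def cart_basis_def)
  moreover have "card B = card (- Z)"
    unfolding B_def by (rule card_image) (auto simp: inj_on_def axis_eq_axis)
  moreover have "card (- Z) = CARD('n) - card Z"
    by (simp add: Compl_eq_Diff_UNIV card_Diff_subset)
  ultimately show ?thesis by (simp add: vec.dim_eq_card_independent)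
qed

lemma Gamma_subset_coordinate:
  fixes h :: "'x::finite \<Rightarrow> 'a::finite list"
  shows "Gamma h \<subseteq> {u. \<forall>i\<in>{k. h k = []}. u $ i = 0}"
  unfolding Gamma_def
  by (rule vec.span_minimal[OF _ subspace_coordinate]) (auto simp: gamma_def)

text \<open>A count dependence supported away from k is a nonzero vector orthogonal to Gamma h that
  vanishes at k; it cannot be orthogonal to the whole hyperplane u_k = 0.\<close>
lemma count_dependent_not_hyperplane:
  fixes h :: "'x::finite \<Rightarrow> 'a::finite list"
  assumes "count_dependent h V" and "k \<notin> V"
  shows "Gamma h \<noteq> {u. u $ k = 0}"
proof
  assume Gamma_eq: "Gamma h = {u. u $ k = 0}"
  obtain c :: "'x \<Rightarrow> rat" and j where cj: "c j \<noteq> 0" and supp: "\<forall>w. c w \<noteq> 0 \<longrightarrow> w \<in> V"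
    and rel: "\<forall>a. (\<Sum>w\<in>UNIV. c w * of_nat (count_list (h w) a)) = 0"
    using assms(1) unfolding count_dependent_def by blast
  define L where "L = {u::rat^'x. (\<Sum>i\<in>UNIV. c i * u $ i) = 0}"
  have "Gamma h \<subseteq> L"
    unfolding Gamma_def
  proof (rule vec.span_minimal)
    show "range (gamma h) \<subseteq> L" using rel by (auto simp: L_def gamma_def)
    show "vec.subspace L"
      by (auto simp: vec.subspace_def L_def sum.distrib distrib_left mult.left_commute
               simp flip: sum_distrib_left)
  qed
  moreover have "axis j 1 \<in> Gamma h"
    using Gamma_eq supp cj assms(2) by (auto simp: axis_def)
  ultimately have "(\<Sum>i\<in>UNIV. c i * axis j (1::rat) $ i) = 0" by (auto simp: L_def)
  then show False
    using cj by (simp add: axis_def if_distrib cong: if_cong)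
qed

text \<open>A solution of rank n - 1 erases at most one unknown, since Gamma h lies in the coordinate
  subspace of the erased unknowns.\<close>
lemma rank_pred_erased_unique:
  fixes h :: "'x::finite \<Rightarrow> 'a::finite list"
  assumes rank: "rank h = CARD('x) - 1" and k: "h k = []"
  shows "h j = [] \<longleftrightarrow> j = k"
proof -
  define Z where "Z = {k. h k = []}"
  have "CARD('x) - 1 = vec.dim (Gamma h)" using rank by (simp add: rank_def)
  also have "\<dots> \<le> vec.dim {u::rat^'x. \<forall>i\<in>Z. u $ i = 0}"
    unfolding Z_def by (rule vec.dim_subset[OF Gamma_subset_coordinate])
  also have "\<dots> = CARD('x) - card Z" by (rule dim_coordinate_subspace)
  finally have "CARD('x) - 1 \<le> CARD('x) - card Z" .
  moreover have "k \<in> Z" and "card Z \<le> CARD('x)"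
    using k by (auto simp: Z_def card_mono)
  moreover have "card Z \<noteq> 0" using \<open>k \<in> Z\<close> by auto
  ultimately have "card Z = 1" by linarith
  then have "Z = {k}" using \<open>k \<in> Z\<close> by (metis card_1_singletonE singletonD)
  then show ?thesis unfolding Z_def by blast
qed

text \<open>If k is the only erased unknown and rank h = n - 1, then Gamma h is the whole hyperplane
  u_k = 0: it is a subspace of it of the same dimension.\<close>
lemma rank_pred_Gamma_hyperplane:
  fixes h :: "'x::finite \<Rightarrow> 'a::finite list"
  assumes rank: "rank h = CARD('x) - 1" and erased: "\<And>j. h j = [] \<longleftrightarrow> j = k"
  shows "Gamma h = {u. u $ k = 0}"
proof (rule vec.subspace_dim_equal)
  show "vec.subspace (Gamma h)" by (simp add: Gamma_def)
  show "vec.subspace {u::rat^'x. u $ k = 0}" using subspace_coordinate[of "{k}"] by simp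
  show "Gamma h \<subseteq> {u. u $ k = 0}" using Gamma_subset_coordinate[of h] erased by simp
  show "vec.dim {u::rat^'x. u $ k = 0} \<le> vec.dim (Gamma h)"
    using dim_coordinate_subspace[where 'a = rat, of "{k}"] rank by (simp add: rank_def)
qed

text \<open>If h solves E, erases only k, and Gamma h is the hyperplane u_k = 0, then deleting k from E
  leaves a trivial equation: otherwise the defect lemma applies to delta k E, which h still solves
  without erasing any of its unknowns.\<close>
lemma delta_trivial_if_Gamma_hyperplane:
  fixes h :: "'x::finite \<Rightarrow> 'a::finite list"
  assumes sol: "is_solution h E" and erased: "\<And>j. h j = [] \<longleftrightarrow> j = k"
    and Gamma_eq: "Gamma h = {u. u $ k = 0}"
  shows "trivial_eq (delta k E)"
proof (rule ccontr)
  let ?u = "filter (\<lambda>y. y \<noteq> k) (fst E)" and ?v = "filter (\<lambda>y. y \<noteq> k) (snd E)"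
  assume "\<not> trivial_eq (delta k E)"
  then have "?u \<noteq> ?v" by (simp add: trivial_eq_def delta_def)
  moreover have "morph h ?u = morph h ?v"
    using sol erased[of k] by (simp add: morph_filter_erased[of h k] is_solution_def)
  moreover have "\<forall>z\<in>set ?u \<union> set ?v. h z \<noteq> []" using erased by auto
  ultimately have "count_dependent h (set ?u \<union> set ?v)"
    by (rule nontrivial_equation_count_dependent)
  then show False using count_dependent_not_hyperplane Gamma_eq by fastforce
qed

theorem lemma4p1:
  fixes E :: "'x::finite equation" and h :: "'x \<Rightarrow> 'a::finite list"
  assumes "is_solution h E" and "erasing h" and "rank h = CARD('x) - 1"
  shows "(\<exists>!k. h k = []) \<and>
         (\<forall>k. h k = [] \<longrightarrow> trivial_eq (delta k E) \<and> Gamma h = {u. u $ k = 0})"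
proof -
  obtain k where "h k = []" using assms(2) by (auto simp: erasing_def)
  then have erased: "h j = [] \<longleftrightarrow> j = k" for j
    using rank_pred_erased_unique assms(3) by blast
  have Gamma_eq: "Gamma h = {u. u $ k = 0}"
    using assms(3) erased by (rule rank_pred_Gamma_hyperplane)
  have "trivial_eq (delta k E)"
    using assms(1) erased Gamma_eq by (rule delta_trivial_if_Gamma_hyperplane)
  then show ?thesis using Gamma_eq by (simp add: erased)
qed

end
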